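(* Let $a,b,c>0$ and let $d,e$ be real numbers, not in $\{0,-1,-2,\dots\}$, such that $de\ge 2abc$ and $$d+e\ \ge\ \max\Big\{a+b+c,\ \tfrac12\big(ab+bc+ac+2(a+b+c)-1-2abc\big),\ 2(ab+bc+ac)-3abc\Big\}.$$ Then $f(z)=z\,{}_3F_2(a,b,c;d,e;z)$ is close-to-convex in $\mathbb{D}$ with respect to $-\log(1-z)$.
   Context: $\mathbb{D}=\{z\in\mathbb{C}:|z|<1\}$. For $x\in\mathbb{C}$, $(x)_0=1$ and $(x)_n=x(x+1)\cdots(x+n-1)$ for $n\ge1$. The Clausen hypergeometric function is ${}_3F_2(a,b,c;d,e;z)=\sum_{n=0}^\infty \frac{(a)_n(b)_n(c)_n}{(d)_n(e)_n(1)_n}z^n$ for $|z|<1$ (with $d,e\notin\{0,-1,-2,\dots\}$). A normalized analytic function $f$ on $\mathbb{D}$ ($f(0)=0$, $f'(0)=1$) is close-to-convex with respect to a convex univalent function $g$ on $\mathbb{D}$ if $f$ is univalent on $\mathbb{D}$ and $\operatorname{Re}\big(f'(z)/g'(z)\big)>0$ for all $z\in\mathbb{D}$. Here $g(z)=-\log(1-z)$, which is convex univalent on $\mathbb{D}$, with $g'(z)=1/(1-z)$. *)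

theory Defs
  imports "HOL-Analysis.Analysis"
begin

definition hyp3F2 :: "complex \<Rightarrow> complex \<Rightarrow> complex \<Rightarrow> complex \<Rightarrow> complex \<Rightarrow> complex \<Rightarrow> complex" where
  "hyp3F2 a b c d e z =
     (\<Sum>n. (pochhammer a n * pochhammer b n * pochhammer c n) /
           (pochhammer d n * pochhammer e n * pochhammer 1 n) * z ^ n)"

definition close_to_convex_wrt :: "(complex \<Rightarrow> complex) \<Rightarrow> (complex \<Rightarrow> complex) \<Rightarrow> bool" where
  "close_to_convex_wrt f g \<longleftrightarrow>
     f holomorphic_on ball 0 1 \<and> f 0 = 0 \<and> deriv f 0 = 1 \<and>
     inj_on f (ball 0 1) \<and>
     (\<forall>z\<in>ball 0 1. Re (deriv f z / deriv g z) > 0)"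

end

theory Submission
  imports Defs
begin

(* The Taylor coefficients A n of 3F2(a,b,c;d,e;z) are positive, and the hypotheses on
   d e and d + e make (n + 1) A n decreasing: the ratio condition (n + 2) A (n + 1) <= (n + 1) A n
   is a polynomial inequality in n whose coefficients are the slacks of those hypotheses.
   Summation by parts then gives Re ((1 - z) f'(z)) > 0 for f(z) = z 3F2(...), which is
   Re (f'/g') > 0 for g(z) = -log(1 - z). Univalence follows as in the Noshiro-Warschawski
   theorem, because g maps the disc onto a convex domain: the logarithm of the disc |u - 1| < 1
   is a strict sublevel set of the convex function Re w - ln (cos (Im w)). *)

lemma convex_on_minus_ln_cos: "convex_on {-pi/2<..<pi/2} (\<lambda>y. - ln (cos y))"
proof (rule convex_on_realI[where f' = tan])
  show "connected {-pi/2<..<pi/2::real}" by simp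
next
  fix x :: real assume "x \<in> {-pi/2<..<pi/2}"
  then have "cos x > 0" by (auto intro: cos_gt_zero_pi)
  then show "((\<lambda>y. - ln (cos y)) has_real_derivative tan x) (at x)"
    by (auto intro!: derivative_eq_intros simp: tan_def field_simps)
next
  fix x y :: real assume "x \<in> {-pi/2<..<pi/2}" "y \<in> {-pi/2<..<pi/2}" "x \<le> y"
  then show "tan x \<le> tan y"
    by (cases "x = y") (auto intro!: less_imp_le tan_monotone)
qed

lemma convex_on_imp_convex_strict_sublevel:
  assumes "convex_on S f"
  shows "convex {x \<in> S. f x < a}"
proof (rule convexI)
  fix x y and u v :: real
  assume x: "x \<in> {x \<in> S. f x < a}" and y: "y \<in> {x \<in> S. f x < a}"
    and uv: "0 \<le> u" "0 \<le> v" "u + v = 1"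
  have "f (u *\<^sub>R x + v *\<^sub>R y) \<le> u * f x + v * f y"
    using assms x y uv by (auto simp: convex_on_def)
  also have "\<dots> \<le> u * max (f x) (f y) + v * max (f x) (f y)"
    using uv by (intro add_mono mult_left_mono) auto
  also have "\<dots> < a" using x y uv by (simp flip: distrib_right)
  finally show "u *\<^sub>R x + v *\<^sub>R y \<in> {x \<in> S. f x < a}"
    using x y uv convexD[OF convex_on_imp_convex[OF assms]] by auto
qed

lemma norm_exp_minus_one_less_one_iff:
  "norm (exp w - 1) < 1 \<longleftrightarrow> exp (Re w) < 2 * cos (Im w)"
proof -
  have expand: "(x * c - 1)\<^sup>2 + (x * s)\<^sup>2 = x\<^sup>2 * (s\<^sup>2 + c\<^sup>2) - 2 * x * c + 1" for x c s :: real
    by (simp add: power2_eq_square algebra_simps)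
  have "(norm (exp w - 1))\<^sup>2 = (exp (Re w) * cos (Im w) - 1)\<^sup>2 + (exp (Re w) * sin (Im w))\<^sup>2"
    by (simp add: cmod_power2 Re_exp Im_exp)
  also have "\<dots> = (exp (Re w))\<^sup>2 - 2 * exp (Re w) * cos (Im w) + 1"
    unfolding expand by simp
  finally have square:
    "(norm (exp w - 1))\<^sup>2 = (exp (Re w))\<^sup>2 - 2 * exp (Re w) * cos (Im w) + 1" .
  have "norm (exp w - 1) < 1 \<longleftrightarrow> (norm (exp w - 1))\<^sup>2 < 1"
    by (simp add: power_less_one_iff abs_square_less_1)
  also have "\<dots> \<longleftrightarrow> exp (Re w) * exp (Re w) < exp (Re w) * (2 * cos (Im w))"
    unfolding square by (simp add: power2_eq_square)
  finally show ?thesis by simp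
qed

lemma Ln_image_ball_1_1:
  "Ln ` ball 1 1 = {w. \<bar>Im w\<bar> < pi/2 \<and> exp (Re w) < 2 * cos (Im w)}"
proof safe
  fix u :: complex assume "u \<in> ball 1 1"
  then have "Re u > 0" "norm (u - 1) < 1"
    using complex_Re_le_cmod[of "1 - u"] by (auto simp: dist_norm norm_minus_commute)
  moreover have "u \<noteq> 0" using \<open>Re u > 0\<close> by auto
  ultimately have u: "Re u > 0" "norm (exp (Ln u) - 1) < 1" by auto
  then show "\<bar>Im (Ln u)\<bar> < pi/2" using Re_Ln_pos_lt_imp by blast
  show "exp (Re (Ln u)) < 2 * cos (Im (Ln u))"
    using u norm_exp_minus_one_less_one_iff by blast
next
  fix w :: complex assume w: "\<bar>Im w\<bar> < pi/2" "exp (Re w) < 2 * cos (Im w)"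
  then have "exp w \<in> ball 1 1"
    using norm_exp_minus_one_less_one_iff[of w] by (simp add: dist_norm norm_minus_commute)
  moreover have "Ln (exp w) = w" using w pi_gt_zero by (intro Ln_exp) auto
  ultimately show "w \<in> Ln ` ball 1 1" by force
qed

lemma convex_Ln_image_ball_1_1: "convex (Ln ` ball 1 1)"
proof -
  define strip where "strip = {w. - pi/2 < Im w} \<inter> {w. Im w < pi/2}"
  have "convex strip" unfolding strip_def
    by (intro convex_Int convex_halfspace_Im_gt convex_halfspace_Im_lt)
  have "convex_on strip (\<lambda>w. Re w - ln (cos (Im w)))"
  proof (rule convex_onI)
    fix t :: real and x y assume "0 < t" "t < 1" "x \<in> strip" "y \<in> strip"
    then have "- ln (cos ((1 - t) * Im x + t * Im y))
        \<le> (1 - t) * - ln (cos (Im x)) + t * - ln (cos (Im y))"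
      using convex_onD[OF convex_on_minus_ln_cos, of t "Im x" "Im y"] by (simp add: strip_def)
    then show "Re ((1 - t) *\<^sub>R x + t *\<^sub>R y) - ln (cos (Im ((1 - t) *\<^sub>R x + t *\<^sub>R y)))
        \<le> (1 - t) * (Re x - ln (cos (Im x))) + t * (Re y - ln (cos (Im y)))"
      by (simp add: algebra_simps)
  qed fact
  then have "convex {w \<in> strip. Re w - ln (cos (Im w)) < ln 2}"
    by (rule convex_on_imp_convex_strict_sublevel)
  also have "{w \<in> strip. Re w - ln (cos (Im w)) < ln 2} = Ln ` ball 1 1"
  proof -
    have "w \<in> strip \<and> Re w - ln (cos (Im w)) < ln 2 \<longleftrightarrow>
        \<bar>Im w\<bar> < pi/2 \<and> exp (Re w) < 2 * cos (Im w)" for w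
    proof (cases "\<bar>Im w\<bar> < pi/2")
      case True
      then have "cos (Im w) > 0" by (intro cos_gt_zero_pi) auto
      with True show ?thesis
        by (auto simp: strip_def abs_less_iff ln_less_cancel_iff[symmetric] ln_mult algebra_simps
            simp del: ln_less_cancel_iff)
    qed (auto simp: strip_def)
    then show ?thesis unfolding Ln_image_ball_1_1 by blast
  qed
  finally show ?thesis .
qed

lemma inj_on_if_Re_deriv_pos:
  fixes h h' :: "complex \<Rightarrow> complex"
  assumes "convex U"
    and deriv: "\<And>w. w \<in> U \<Longrightarrow> (h has_field_derivative h' w) (at w)"
    and pos: "\<And>w. w \<in> U \<Longrightarrow> Re (h' w) > 0"
  shows "inj_on h U"
proof (rule inj_onI, rule ccontr)
  \<comment> \<open>Re (cnj \<Delta> * h) increases strictly along the segment from w1 to w2 = w1 + \<Delta>.\<close>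
  fix w1 w2 assume w: "w1 \<in> U" "w2 \<in> U" and eq: "h w1 = h w2" and ne: "w1 \<noteq> w2"
  define \<Delta> where "\<Delta> = w2 - w1"
  define \<phi> where "\<phi> t = Re (cnj \<Delta> * h (w1 + of_real t * \<Delta>))" for t
  have "\<phi> 0 < \<phi> 1"
  proof (rule DERIV_pos_imp_increasing[where f = \<phi>])
    fix t :: real assume "0 \<le> t" "t \<le> 1"
    then have w_t: "w1 + of_real t * \<Delta> \<in> U"
      using convexD_alt[OF \<open>convex U\<close> w, of t]
      by (simp add: \<Delta>_def scaleR_conv_of_real algebra_simps)
    have "((\<lambda>s. cnj \<Delta> * h (w1 + s * \<Delta>)) has_field_derivative
        cnj \<Delta> * (h' (w1 + of_real t * \<Delta>) * \<Delta>)) (at (of_real t))"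
      by (intro DERIV_cmult DERIV_chain2[where g = "\<lambda>s. w1 + s * \<Delta>", OF deriv[OF w_t]])
        (auto intro!: derivative_eq_intros)
    then have "(\<phi> has_real_derivative Re (cnj \<Delta> * (h' (w1 + of_real t * \<Delta>) * \<Delta>))) (at t)"
      unfolding \<phi>_def by (intro has_field_derivative_Re has_vector_derivative_real_field)
    moreover have "cnj \<Delta> * (h' (w1 + of_real t * \<Delta>) * \<Delta>) =
        of_real ((norm \<Delta>)\<^sup>2) * h' (w1 + of_real t * \<Delta>)"
      by (simp only: complex_norm_square) (simp add: mult_ac)
    moreover have "(norm \<Delta>)\<^sup>2 * Re (h' (w1 + of_real t * \<Delta>)) > 0"
      using ne pos[OF w_t] by (simp add: \<Delta>_def)
    ultimately show "\<exists>y. (\<phi> has_real_derivative y) (at t) \<and> 0 < y" by auto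
  qed simp
  then show False using eq by (simp add: \<phi>_def \<Delta>_def)
qed

lemma convex_image_minus_Ln_one_minus: "convex ((\<lambda>z. - Ln (1 - z)) ` ball 0 1)"
proof -
  have "(\<lambda>z. 1 - z) ` ball 0 1 = ball (1::complex) 1"
  proof safe
    fix u :: complex assume "u \<in> ball 1 1"
    then show "u \<in> (\<lambda>z. 1 - z) ` ball 0 1"
      by (intro image_eqI[of _ _ "1 - u"]) (auto simp: dist_norm, metis norm_minus_commute)
  qed (auto simp: dist_norm norm_minus_commute)
  then have "convex ((\<lambda>w. - w) ` Ln ` (\<lambda>z. 1 - z) ` ball 0 1)"
    using convex_negations[OF convex_Ln_image_ball_1_1] by simp
  then show ?thesis by (simp add: image_image)
qed

lemma inj_on_ball_if_Re_deriv_mult_one_minus_pos: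
  fixes f f' :: "complex \<Rightarrow> complex"
  assumes deriv: "\<And>z. z \<in> ball 0 1 \<Longrightarrow> (f has_field_derivative f' z) (at z)"
    and pos: "\<And>z. z \<in> ball 0 1 \<Longrightarrow> Re (f' z * (1 - z)) > 0"
  shows "inj_on f (ball 0 1)"
proof -
  define g where "g z = - Ln (1 - z)" for z
  \<comment> \<open>h = f \<circ> g\<inverse> on the convex domain g(ball 0 1), and h'(g z) = f' z / g' z = f' z * (1 - z).\<close>
  define h where "h w = f (1 - exp (- w))" for w
  have g_inverse: "1 - exp (- g z) = z" if "z \<in> ball 0 1" for z
  proof -
    have "1 - z \<noteq> 0" using that by auto
    then show ?thesis by (simp add: g_def)
  qed
  have "inj_on h (g ` ball 0 1)"
  proof (rule inj_on_if_Re_deriv_pos[where h' = "\<lambda>w. f' (1 - exp (- w)) * exp (- w)"])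
    show "convex (g ` ball 0 1)" unfolding g_def by (rule convex_image_minus_Ln_one_minus)
  next
    fix w assume "w \<in> g ` ball 0 1"
    then obtain z where z: "z \<in> ball 0 1" and w: "1 - exp (- w) = z" using g_inverse by blast
    then have "exp (- w) = 1 - z" unfolding w[symmetric] by simp
    then show "Re (f' (1 - exp (- w)) * exp (- w)) > 0" using pos[OF z] w by simp
    have "((\<lambda>w. 1 - exp (- w)) has_field_derivative exp (- w)) (at w)"
      by (auto intro!: derivative_eq_intros)
    then show "(h has_field_derivative f' (1 - exp (- w)) * exp (- w)) (at w)"
      unfolding h_def using DERIV_chain2[where g = "\<lambda>w. 1 - exp (- w)", OF deriv[OF z, folded w]] w
      by simp
  qed
  moreover have "inj_on g (ball 0 1)" using g_inverse by (rule inj_on_inverseI)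
  ultimately have "inj_on (h \<circ> g) (ball 0 1)" by (rule comp_inj_on[rotated])
  moreover have "(h \<circ> g) z = f z" if "z \<in> ball 0 1" for z
    using g_inverse[OF that] by (simp add: h_def)
  ultimately show ?thesis using inj_on_cong by blast
qed

lemma summable_power_series_bounded:
  fixes c :: "nat \<Rightarrow> 'a::{real_normed_div_algebra,banach}"
  assumes "\<And>n. norm (c n) \<le> M" and "norm z < 1"
  shows "summable (\<lambda>n. c n * z ^ n)"
proof (rule summable_comparison_test')
  show "summable (\<lambda>n. M * norm z ^ n)"
    using assms(2) by (intro summable_mult summable_geometric) auto
  show "norm (c n * z ^ n) \<le> M * norm z ^ n" for n
    using assms(1)[of n] by (simp add: norm_mult norm_power mult_right_mono)
qed

lemma has_field_derivative_mult_power_series: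
  fixes A :: "nat \<Rightarrow> 'a::{real_normed_field,banach}"
  assumes bounded: "\<And>n. norm (A n) \<le> M" and "norm z < 1"
  shows "((\<lambda>z. z * (\<Sum>n. A n * z ^ n)) has_field_derivative
           (\<Sum>n. of_nat (Suc n) * A n * z ^ n)) (at z)"
proof -
  define c where "c n = (case n of 0 \<Rightarrow> 0 | Suc m \<Rightarrow> A m)" for n
  have c_bounded: "norm (c n) \<le> M" for n
    using bounded order_trans[OF norm_ge_zero bounded] by (cases n) (auto simp: c_def)
  have shift: "z * (\<Sum>n. A n * z ^ n) = (\<Sum>n. c n * z ^ n)" if "norm z < 1" for z
  proof -
    have "(\<lambda>n. z * (A n * z ^ n)) sums (z * (\<Sum>n. A n * z ^ n))"
      using summable_power_series_bounded[OF bounded that] by (intro sums_mult summable_sums)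
    then have "(\<lambda>n. c (Suc n) * z ^ Suc n) sums (z * (\<Sum>n. A n * z ^ n))"
      by (simp add: c_def mult_ac)
    then have "(\<lambda>n. c n * z ^ n) sums (z * (\<Sum>n. A n * z ^ n) + c 0 * z ^ 0)"
      by (rule sums_Suc)
    then show ?thesis by (simp add: c_def sums_iff)
  qed
  have "((\<lambda>z. \<Sum>n. c n * z ^ n) has_field_derivative (\<Sum>n. diffs c n * z ^ n)) (at z)"
    using summable_power_series_bounded[OF c_bounded] assms(2) by (rule termdiffs_strong')
  moreover have "diffs c n = of_nat (Suc n) * A n" for n by (simp add: diffs_def c_def)
  ultimately have "((\<lambda>z. \<Sum>n. c n * z ^ n) has_field_derivative
      (\<Sum>n. of_nat (Suc n) * A n * z ^ n)) (at z)"
    by simp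
  then show ?thesis
    by (rule has_field_derivative_transform_within_open[where S = "ball 0 1"])
      (use assms(2) shift in auto)
qed

lemma Re_power_series_mult_one_minus_pos:
  fixes B :: "nat \<Rightarrow> real" and z :: complex
  assumes "B 0 > 0" and decreasing: "\<And>n. B (Suc n) \<le> B n" and nonneg: "\<And>n. B n \<ge> 0"
    and "norm z < 1"
  shows "Re ((\<Sum>n. of_real (B n) * z ^ n) * (1 - z)) > 0"
proof -
  \<comment> \<open>(1 - z) S = B 0 - (\<Sum>n. (B n - B (n + 1)) z^(n+1)), and by telescoping the
      last sum has norm at most B 0 |z| < B 0.\<close>
  define S where "S = (\<Sum>n. of_real (B n) * z ^ n)"
  define D where "D n = of_real (B n - B (Suc n)) * z ^ Suc n" for n
  have "decseq B" using decreasing by (rule decseq_SucI)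
  then obtain L where L: "B \<longlonglongrightarrow> L"
    using nonneg decseq_convergent by blast
  have "L \<ge> 0" using L nonneg by (intro LIMSEQ_le_const) auto
  have "summable (\<lambda>n. of_real (B n) * z ^ n)"
    using \<open>decseq B\<close> nonneg assms(4)
    by (intro summable_power_series_bounded[where M = "B 0"]) (auto simp: decseq_def)
  then have "(\<lambda>n. of_real (B n) * z ^ n) sums S" unfolding S_def by (rule summable_sums)
  moreover have "(\<lambda>n. of_real (B (Suc n)) * z ^ Suc n) sums (S - of_real (B 0))"
    using calculation sums_Suc_iff[of "\<lambda>n. of_real (B n) * z ^ n" "S - of_real (B 0)"] by simp
  ultimately have "(\<lambda>n. of_real (B n) * z ^ n * z - of_real (B (Suc n)) * z ^ Suc n)
      sums (S * z - (S - of_real (B 0)))"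
    by (intro sums_diff sums_mult2)
  moreover have "(\<lambda>n. of_real (B n) * z ^ n * z - of_real (B (Suc n)) * z ^ Suc n) = D"
    by (auto simp: D_def algebra_simps)
  ultimately have "D sums (S * z - (S - of_real (B 0)))" by simp
  then have S_factor: "S * (1 - z) = of_real (B 0) - suminf D" by (simp add: sums_iff algebra_simps)
  moreover have "norm (suminf D) \<le> (B 0 - L) * norm z"
  proof -
    have bound: "norm (D n) \<le> (B n - B (Suc n)) * norm z" for n
    proof -
      have "norm z ^ Suc n \<le> norm z"
        using assms(4) by (simp add: mult_left_le power_le_one)
      moreover have "norm (D n) = (B n - B (Suc n)) * norm z ^ Suc n"
        using decreasing[of n] by (simp add: D_def norm_mult norm_power del: of_real_diff)
      ultimately show ?thesis
        using decreasing[of n] by (simp add: mult_left_mono)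
    qed
    have telescope: "(\<lambda>n. (B n - B (Suc n)) * norm z) sums ((B 0 - L) * norm z)"
      using L by (intro sums_mult2 telescope_sums')
    show ?thesis
      using norm_suminf_le[OF bound sums_summable[OF telescope]] sums_unique[OF telescope] by simp
  qed
  moreover have "(B 0 - L) * norm z < B 0"
  proof -
    have "(B 0 - L) * norm z \<le> B 0 * norm z"
      using \<open>L \<ge> 0\<close> by (intro mult_right_mono) auto
    also have "\<dots> < B 0" using assms(1,4) by simp
    finally show ?thesis .
  qed
  ultimately have "norm (suminf D) < B 0" by linarith
  then have "Re (suminf D) < B 0" using complex_Re_le_cmod[of "suminf D"] by linarith
  then have "Re (S * (1 - z)) > 0" unfolding S_factor by simp
  then show ?thesis unfolding S_def .
qed

lemma close_to_convex_wrt_minus_Ln_one_minus: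
  fixes f f' :: "complex \<Rightarrow> complex"
  assumes deriv: "\<And>z. z \<in> ball 0 1 \<Longrightarrow> (f has_field_derivative f' z) (at z)"
    and "f 0 = 0" and "f' 0 = 1"
    and pos: "\<And>z. z \<in> ball 0 1 \<Longrightarrow> Re (f' z * (1 - z)) > 0"
  shows "close_to_convex_wrt f (\<lambda>z. - Ln (1 - z))"
  unfolding close_to_convex_wrt_def
proof (intro conjI ballI)
  show "f holomorphic_on ball 0 1"
    using deriv by (auto simp: holomorphic_on_open intro!: exI)
  show "f 0 = 0" by fact
  show "deriv f 0 = 1" using DERIV_imp_deriv[OF deriv] \<open>f' 0 = 1\<close> by simp
  show "inj_on f (ball 0 1)" using deriv pos by (rule inj_on_ball_if_Re_deriv_mult_one_minus_pos)
next
  fix z :: complex assume z: "z \<in> ball 0 1"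
  then have "Re (1 - z) > 0" using complex_Re_le_cmod[of z] by simp
  then have "((\<lambda>z. - Ln (1 - z)) has_field_derivative 1 / (1 - z)) (at z)"
    by (auto intro!: derivative_eq_intros simp: complex_nonpos_Reals_iff field_simps)
  then have "deriv (\<lambda>z. - Ln (1 - z)) z = 1 / (1 - z)" by (rule DERIV_imp_deriv)
  moreover have "deriv f z = f' z" using deriv[OF z] by (rule DERIV_imp_deriv)
  ultimately show "Re (deriv f z / deriv (\<lambda>z. - Ln (1 - z)) z) > 0" using pos[OF z] by simp
qed

lemma close_to_convex_wrt_minus_Ln_one_minus_if_coeffs_decreasing:
  fixes A :: "nat \<Rightarrow> real"
  assumes "A 0 = 1" and nonneg: "\<And>n. A n \<ge> 0"
    and decreasing: "\<And>n. (real n + 2) * A (Suc n) \<le> (real n + 1) * A n"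
  shows "close_to_convex_wrt (\<lambda>z. z * (\<Sum>n. of_real (A n) * z ^ n)) (\<lambda>z. - Ln (1 - z))"
proof (rule close_to_convex_wrt_minus_Ln_one_minus)
  define B where "B n = (real n + 1) * A n" for n
  have "B 0 = 1" using \<open>A 0 = 1\<close> by (simp add: B_def)
  have B_decreasing: "B (Suc n) \<le> B n" for n
    using decreasing[of n] by (simp add: B_def add_ac)
  have B_nonneg: "B n \<ge> 0" for n using nonneg[of n] by (simp add: B_def)
  have "A n \<le> B n" for n using nonneg[of n] by (simp add: B_def algebra_simps)
  also have "B n \<le> B 0" for n
    using decseq_SucI[where X = B, OF B_decreasing] by (simp add: decseq_def)
  finally have "norm (of_real (A n) :: complex) \<le> 1" for n
    using nonneg[of n] \<open>B 0 = 1\<close> by simp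
  then show "((\<lambda>z. z * (\<Sum>n. of_real (A n) * z ^ n)) has_field_derivative
      (\<Sum>n. of_real (B n) * z ^ n)) (at z)" if "z \<in> ball 0 1" for z :: complex
    using has_field_derivative_mult_power_series[of "\<lambda>n. of_real (A n)" 1 z] that
    by (simp add: B_def add_ac)
  show "(\<Sum>n. of_real (B n) * 0 ^ n) = (1::complex)" using \<open>B 0 = 1\<close> by simp
  show "Re ((\<Sum>n. of_real (B n) * z ^ n) * (1 - z)) > 0" if "z \<in> ball 0 1" for z
    using \<open>B 0 = 1\<close> B_decreasing B_nonneg that by (intro Re_power_series_mult_one_minus_pos) auto
qed simp

definition hyp3F2_coeff :: "real \<Rightarrow> real \<Rightarrow> real \<Rightarrow> real \<Rightarrow> real \<Rightarrow> nat \<Rightarrow> real" where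
  "hyp3F2_coeff a b c d e n =
     pochhammer a n * pochhammer b n * pochhammer c n / (pochhammer d n * pochhammer e n * fact n)"

lemma hyp3F2_of_real:
  "hyp3F2 (of_real a) (of_real b) (of_real c) (of_real d) (of_real e) z =
     (\<Sum>n. of_real (hyp3F2_coeff a b c d e n) * z ^ n)"
  by (simp add: hyp3F2_def hyp3F2_coeff_def pochhammer_of_real flip: pochhammer_fact)

lemma hyp3F2_coeff_Suc:
  "hyp3F2_coeff a b c d e (Suc n) =
     hyp3F2_coeff a b c d e n *
       ((a + real n) * (b + real n) * (c + real n) / ((d + real n) * (e + real n) * (real n + 1)))"
  by (simp add: hyp3F2_coeff_def pochhammer_Suc times_divide_times_eq ac_simps)

lemma hyp3F2_coeff_pos:
  assumes "a > 0" "b > 0" "c > 0" "d > 0" "e > 0"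
  shows "hyp3F2_coeff a b c d e n > 0"
  using assms by (simp add: hyp3F2_coeff_def pochhammer_pos)

lemma quartic_le_if_hyp3F2_conditions:
  fixes a b c d e x :: real
  assumes "x \<ge> 0"
    and "d * e \<ge> 2 * a * b * c"
    and "d + e \<ge> a + b + c"
    and "d + e \<ge> (a*b + b*c + a*c + 2*(a + b + c) - 1 - 2*a*b*c) / 2"
    and "d + e \<ge> 2*(a*b + b*c + a*c) - 3*a*b*c"
  shows "(x + 2) * (a + x) * (b + x) * (c + x) \<le> (x + 1)\<^sup>2 * (d + x) * (e + x)"
proof -
  \<comment> \<open>The coefficients of this cubic in x are the slacks of the four hypotheses.\<close>
  have "(x + 1)\<^sup>2 * (d + x) * (e + x) - (x + 2) * (a + x) * (b + x) * (c + x) =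
     (d + e - (a + b + c)) * x ^ 3
     + (d * e + 2 * (d + e) + 1 - (a*b + b*c + a*c) - 2 * (a + b + c)) * x\<^sup>2
     + (2 * (d * e) + (d + e) - a*b*c - 2 * (a*b + b*c + a*c)) * x
     + (d * e - 2 * a*b*c)"
    by (simp add: algebra_simps power2_eq_square power3_eq_cube)
  also have "\<dots> \<ge> 0"
    using assms by (intro add_nonneg_nonneg mult_nonneg_nonneg) (auto simp: mult.assoc)
  finally show ?thesis by simp
qed

lemma hyp3F2_coeff_decreasing:
  fixes a b c d e :: real
  assumes "a > 0" "b > 0" "c > 0" "d > 0" "e > 0"
    and "d * e \<ge> 2 * a * b * c"
    and "d + e \<ge> a + b + c"
    and "d + e \<ge> (a*b + b*c + a*c + 2*(a + b + c) - 1 - 2*a*b*c) / 2"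
    and "d + e \<ge> 2*(a*b + b*c + a*c) - 3*a*b*c"
  shows "(real n + 2) * hyp3F2_coeff a b c d e (Suc n) \<le> (real n + 1) * hyp3F2_coeff a b c d e n"
proof -
  define x where "x = real n"
  have "x \<ge> 0" by (simp add: x_def)
  have "(x + 2) * (a + x) * (b + x) * (c + x) \<le> (x + 1)\<^sup>2 * (d + x) * (e + x)"
    using quartic_le_if_hyp3F2_conditions[OF \<open>x \<ge> 0\<close> assms(6-9)] .
  moreover have "(d + x) * (e + x) * (x + 1) > 0" using assms(4,5) \<open>x \<ge> 0\<close> by simp
  ultimately have "(x + 2) * ((a + x) * (b + x) * (c + x) / ((d + x) * (e + x) * (x + 1))) \<le> x + 1"
    using \<open>x \<ge> 0\<close> by (simp add: field_simps power2_eq_square)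
  then have "hyp3F2_coeff a b c d e n *
        ((x + 2) * ((a + x) * (b + x) * (c + x) / ((d + x) * (e + x) * (x + 1))))
      \<le> hyp3F2_coeff a b c d e n * (x + 1)"
    using hyp3F2_coeff_pos[OF assms(1-5), of n] by (intro mult_left_mono) auto
  then show ?thesis
    unfolding hyp3F2_coeff_Suc x_def[symmetric] by (simp add: mult_ac)
qed

theorem theorem2p1:
  fixes a b c d e :: real
  assumes "a > 0" "b > 0" "c > 0"
    and "d \<notin> {x. \<exists>k::nat. x = - real k}"
    and "e \<notin> {x. \<exists>k::nat. x = - real k}"
    and "d * e \<ge> 2 * a * b * c"
    and "d + e \<ge> a + b + c"
    and "d + e \<ge> (a*b + b*c + a*c + 2*(a + b + c) - 1 - 2*a*b*c) / 2"
    and "d + e \<ge> 2*(a*b + b*c + a*c) - 3*a*b*c"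
  shows "close_to_convex_wrt
           (\<lambda>z. z * hyp3F2 (complex_of_real a) (complex_of_real b) (complex_of_real c)
                              (complex_of_real d) (complex_of_real e) z)
           (\<lambda>z. - Ln (1 - z))"
proof -
  \<comment> \<open>The hypotheses that d and e are not poles are implied by d e > 0 and d + e > 0.\<close>
  have "2 * a * b * c > 0" using assms(1-3) by simp
  then have "d * e > 0" using assms(6) by linarith
  moreover have "d + e > 0" using assms(1-3,7) by linarith
  ultimately have "d > 0" "e > 0" by (auto simp: zero_less_mult_iff)
  note coeff_pos = hyp3F2_coeff_pos[OF assms(1-3) this]
  show ?thesis
    unfolding hyp3F2_of_real
  proof (rule close_to_convex_wrt_minus_Ln_one_minus_if_coeffs_decreasing)
    show "hyp3F2_coeff a b c d e 0 = 1" by (simp add: hyp3F2_coeff_def)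
    show "hyp3F2_coeff a b c d e n \<ge> 0" for n using coeff_pos[of n] by simp
    show "(real n + 2) * hyp3F2_coeff a b c d e (Suc n) \<le> (real n + 1) * hyp3F2_coeff a b c d e n"
      for n
      using hyp3F2_coeff_decreasing[OF assms(1-3) \<open>d > 0\<close> \<open>e > 0\<close> assms(6-9)] .
  qed
qed

end
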